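(* Consider a storage system for two files $a$ and $b$ consisting of $C\ge0$ coded nodes and no systematic nodes, each node with service rate $\mu>0$, in which any two distinct coded nodes together can recover file $a$ and can recover file $b$. If $C>1$, the service capacity region is the region bounded by $\lambda_a=0$, $\lambda_b=0$ and $\lambda_b=\frac{C}{2}\mu-\lambda_a$, i.e. $\{(\lambda_a,\lambda_b)\in\mathbb{R}_{\ge0}^2:\lambda_a+\lambda_b\le\frac{C}{2}\mu\}$. If $C\le1$, the service capacity region is the single point $(0,0)$.
   Context: The recovering sets of each file are exactly the $2$-element subsets of the set of $C$ coded nodes (a single coded node cannot recover either file). Requests for $a$ and $b$ arrive at rates $\lambda_a,\lambda_b\ge0$. The service capacity region is the set of $(\lambda_a,\lambda_b)$ for which there exist nonnegative rates assigned to the recovering sets of $a$ summing to $\lambda_a$ and to the recovering sets of $b$ summing to $\lambda_b$, such that for every node the total rate assigned to recovering sets containing it is at most $\mu$. (Here the total number of nodes is $N=C$.) *)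

theory Defs
  imports Main Complex_Main
begin

definition recovering_sets :: "nat \<Rightarrow> nat set set" where
  "recovering_sets C = {S. S \<subseteq> {..<C} \<and> card S = 2}"

definition capacity_region :: "nat \<Rightarrow> real \<Rightarrow> (real \<times> real) set" where
  "capacity_region C mu = {(la, lb). la \<ge> 0 \<and> lb \<ge> 0 \<and>
     (\<exists>xa xb :: nat set \<Rightarrow> real.
        (\<forall>S\<in>recovering_sets C. xa S \<ge> 0 \<and> xb S \<ge> 0) \<and>
        (\<Sum>S\<in>recovering_sets C. xa S) = la \<and>
        (\<Sum>S\<in>recovering_sets C. xb S) = lb \<and>
        (\<forall>i<C. (\<Sum>S\<in>{S\<in>recovering_sets C. i \<in> S}. xa S + xb S) \<le> mu))}"

end

theory Submission
  imports Defs
begin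

text \<open>Every recovering set contains exactly two nodes, so summing the loads of all
  \<open>C\<close> nodes counts each assigned rate twice; with per-node load at most \<open>\<mu>\<close> this gives
  \<open>2 (\<lambda>\<^sub>a + \<lambda>\<^sub>b) \<le> C \<mu>\<close>. Conversely, when \<open>C > 1\<close> there are \<open>C (C - 1) / 2\<close> recovering
  sets, each node lying in \<open>C - 1\<close> of them, so spreading both demands uniformly over
  all recovering sets puts load \<open>2 (\<lambda>\<^sub>a + \<lambda>\<^sub>b) / C\<close> on every node.\<close>

lemma sum_sum_incidence:
  fixes f :: "'b set \<Rightarrow> 'c::comm_semiring_1"
  assumes "finite I" "finite F" "\<forall>S\<in>F. S \<subseteq> I"
  shows "(\<Sum>i\<in>I. \<Sum>S\<in>{S\<in>F. i \<in> S}. f S) = (\<Sum>S\<in>F. of_nat (card S) * f S)"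
proof -
  have "(\<Sum>i\<in>I. \<Sum>S\<in>{S\<in>F. i \<in> S}. f S) = (\<Sum>i\<in>I. \<Sum>S\<in>F. if i \<in> S then f S else 0)"
    using assms(2) by (simp add: sum.inter_filter)
  also have "\<dots> = (\<Sum>S\<in>F. \<Sum>i\<in>I. if i \<in> S then f S else 0)"
    by (rule sum.swap)
  also have "\<dots> = (\<Sum>S\<in>F. of_nat (card S) * f S)"
  proof (rule sum.cong[OF refl])
    fix S assume "S \<in> F"
    then have "{i\<in>I. i \<in> S} = S" using assms(3) by blast
    then show "(\<Sum>i\<in>I. if i \<in> S then f S else 0) = of_nat (card S) * f S"
      using assms(1) by (simp add: sum.inter_filter[symmetric])
  qed
  finally show ?thesis .
qed

lemma finite_recovering_sets: "finite (recovering_sets C)"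
  unfolding recovering_sets_def by (rule finite_subset[of _ "Pow {..<C}"]) auto

lemma sum_node_loads_recovering_sets:
  fixes f :: "nat set \<Rightarrow> 'a::comm_semiring_1"
  shows "(\<Sum>i<C. \<Sum>S\<in>{S\<in>recovering_sets C. i \<in> S}. f S) = 2 * (\<Sum>S\<in>recovering_sets C. f S)"
proof -
  have "(\<Sum>i<C. \<Sum>S\<in>{S\<in>recovering_sets C. i \<in> S}. f S)
      = (\<Sum>S\<in>recovering_sets C. of_nat (card S) * f S)"
    by (rule sum_sum_incidence) (auto simp: finite_recovering_sets recovering_sets_def)
  also have "\<dots> = (\<Sum>S\<in>recovering_sets C. 2 * f S)"
    by (rule sum.cong) (auto simp: recovering_sets_def)
  finally show ?thesis by (simp add: sum_distrib_left)
qed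

lemma card_recovering_sets_containing:
  assumes "i < C"
  shows "card {S\<in>recovering_sets C. i \<in> S} = C - 1"
proof -
  have "{S\<in>recovering_sets C. i \<in> S} = (\<lambda>j. {i, j}) ` ({..<C} - {i})"
  proof (intro equalityI subsetI)
    fix S assume "S \<in> {S\<in>recovering_sets C. i \<in> S}"
    then have S: "S \<subseteq> {..<C}" "card S = 2" "i \<in> S" by (auto simp: recovering_sets_def)
    then obtain j where "S = {i, j}" "j \<noteq> i"
      by (metis card_2_iff doubleton_eq_iff insertE singletonD)
    with S show "S \<in> (\<lambda>j. {i, j}) ` ({..<C} - {i})" by auto
  qed (use assms in \<open>auto simp: recovering_sets_def\<close>)
  moreover have "inj_on (\<lambda>j. {i, j}) ({..<C} - {i})"
    by (auto simp: inj_on_def doubleton_eq_iff)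
  ultimately show ?thesis using assms by (simp add: card_image)
qed

lemma card_recovering_sets: "2 * card (recovering_sets C) = C * (C - 1)"
proof -
  have "2 * card (recovering_sets C) = (\<Sum>i<C. card {S\<in>recovering_sets C. i \<in> S})"
    using sum_node_loads_recovering_sets[of "\<lambda>_. 1 :: nat" C] by simp
  also have "\<dots> = (\<Sum>i<C. C - 1)"
    by (rule sum.cong) (simp_all add: card_recovering_sets_containing)
  finally show ?thesis by simp
qed

lemma recovering_sets_empty:
  assumes "C \<le> 1"
  shows "recovering_sets C = {}"
proof -
  have "card S \<noteq> 2" if "S \<subseteq> {..<C}" for S :: "nat set"
    using card_mono[OF finite_lessThan that] assms by simp
  then show ?thesis unfolding recovering_sets_def by blast
qed

lemma capacity_regionI:
  assumes "la \<ge> 0" "lb \<ge> 0" "\<forall>S\<in>recovering_sets C. xa S \<ge> 0 \<and> xb S \<ge> 0"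
    "(\<Sum>S\<in>recovering_sets C. xa S) = la" "(\<Sum>S\<in>recovering_sets C. xb S) = lb"
    "\<And>i. i < C \<Longrightarrow> (\<Sum>S\<in>{S\<in>recovering_sets C. i \<in> S}. xa S + xb S) \<le> mu"
  shows "(la, lb) \<in> capacity_region C mu"
  unfolding capacity_region_def using assms by auto

lemma capacity_region_subset:
  "capacity_region C mu \<subseteq> {(la, lb). la \<ge> 0 \<and> lb \<ge> 0 \<and> la + lb \<le> real C / 2 * mu}"
proof clarify
  fix la lb assume "(la, lb) \<in> capacity_region C mu"
  then obtain xa xb where
    "la \<ge> 0" "lb \<ge> 0" and
    sums: "(\<Sum>S\<in>recovering_sets C. xa S) = la" "(\<Sum>S\<in>recovering_sets C. xb S) = lb" and
    load: "\<forall>i<C. (\<Sum>S\<in>{S\<in>recovering_sets C. i \<in> S}. xa S + xb S) \<le> mu"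
    unfolding capacity_region_def by auto
  have "2 * (la + lb) = (\<Sum>i<C. \<Sum>S\<in>{S\<in>recovering_sets C. i \<in> S}. xa S + xb S)"
    using sums by (simp add: sum_node_loads_recovering_sets sum.distrib)
  also have "\<dots> \<le> (\<Sum>i<C. mu)"
    using load by (intro sum_mono) auto
  finally show "la \<ge> 0 \<and> lb \<ge> 0 \<and> la + lb \<le> real C / 2 * mu"
    using \<open>la \<ge> 0\<close> \<open>lb \<ge> 0\<close> by simp
qed

lemma uniform_rates_in_capacity_region:
  assumes "C > 1" "la \<ge> 0" "lb \<ge> 0" "la + lb \<le> real C / 2 * mu"
  shows "(la, lb) \<in> capacity_region C mu"
proof -
  let ?R = "recovering_sets C"
  define N where "N = real (card ?R)"
  define M where "M = real (C - 1)"
  have N_eq: "N = real C * M / 2"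
    using arg_cong[OF card_recovering_sets[of C], of real] unfolding N_def M_def by simp
  have "M > 0" "real C > 0" using assms(1) by (auto simp: M_def)
  then have "N > 0" by (simp add: N_eq)
  have load: "(\<Sum>S\<in>{S\<in>?R. i \<in> S}. la / N + lb / N) \<le> mu" if "i < C" for i
  proof -
    have "(\<Sum>S\<in>{S\<in>?R. i \<in> S}. la / N + lb / N) = M * (la / N + lb / N)"
      using that by (simp add: card_recovering_sets_containing M_def)
    also have "\<dots> = 2 * (la + lb) / real C"
      unfolding N_eq using \<open>M > 0\<close> \<open>real C > 0\<close> by (simp add: field_simps)
    also have "\<dots> \<le> mu"
      using assms(4) \<open>real C > 0\<close> by (simp add: field_simps)
    finally show ?thesis .
  qed
  moreover have "(\<Sum>S\<in>?R. la / N) = la" "(\<Sum>S\<in>?R. lb / N) = lb"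
    using \<open>N > 0\<close> by (simp_all add: N_def)
  moreover have "\<forall>S\<in>?R. la / N \<ge> 0 \<and> lb / N \<ge> 0"
    using assms(2,3) \<open>N > 0\<close> by simp
  ultimately show ?thesis
    using assms(2,3) by (intro capacity_regionI[where xa = "\<lambda>_. la / N" and xb = "\<lambda>_. lb / N"]) auto
qed

theorem lemma4:
  fixes C :: nat and mu :: real
  assumes "mu > 0"
  shows "(C > 1 \<longrightarrow> capacity_region C mu =
            {(la, lb). la \<ge> 0 \<and> lb \<ge> 0 \<and> la + lb \<le> real C / 2 * mu})
       \<and> (C \<le> 1 \<longrightarrow> capacity_region C mu = {(0, 0)})"
proof (intro conjI impI)
  assume "C > 1"
  show "capacity_region C mu = {(la, lb). la \<ge> 0 \<and> lb \<ge> 0 \<and> la + lb \<le> real C / 2 * mu}"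
    using uniform_rates_in_capacity_region[OF \<open>C > 1\<close>]
    by (intro equalityI capacity_region_subset) auto
next
  assume "C \<le> 1"
  then show "capacity_region C mu = {(0, 0)}"
    using assms by (auto simp: capacity_region_def recovering_sets_empty)
qed

end
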